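(* Let $P$ be a finite poset, $q$ a positive integer, and $f\in\mathrm{Inc}^q(P)$. If $\mathrm{Con}(f)=(a_1,a_2,\dots,a_q)$, then $\mathrm{Con}(\mathrm{IncPro}(f))=(a_2,\dots,a_q,a_1)$.
   Context: $\mathrm{Inc}^q(P)$ is the set of $f:P\to\{1,\dots,q\}$ with $p_1<p_2\Rightarrow f(p_1)<f(p_2)$. The binary content $\mathrm{Con}(f)=(a_1,\dots,a_q)$ has $a_i=1$ if $f(p)=i$ for some $p\in P$ and $a_i=0$ otherwise. For $1\le i\le q-1$, $\rho_i(f)(x)=i+1$ if $f(x)=i$ and changing only the value at $x$ to $i+1$ yields an element of $\mathrm{Inc}^q(P)$; $\rho_i(f)(x)=i$ if $f(x)=i+1$ and changing only the value at $x$ to $i$ yields an element of $\mathrm{Inc}^q(P)$; $\rho_i(f)(x)=f(x)$ otherwise; $\mathrm{IncPro}=\rho_{q-1}\circ\cdots\circ\rho_1$. *)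

theory Defs
  imports Main
begin

text \<open>The finite poset P is a finite subset of a type with a partial order,
  carrying the induced order. Maps P \<rightarrow> {1..q} are functions 'a \<Rightarrow> nat whose
  values off P are irrelevant.\<close>

definition Inc :: "nat \<Rightarrow> 'a::order set \<Rightarrow> ('a \<Rightarrow> nat) set" where
  "Inc q P = {f. (\<forall>x\<in>P. 1 \<le> f x \<and> f x \<le> q) \<and>
                 (\<forall>x\<in>P. \<forall>y\<in>P. x < y \<longrightarrow> f x < f y)}"

definition Con :: "nat \<Rightarrow> 'a set \<Rightarrow> ('a \<Rightarrow> nat) \<Rightarrow> nat list" where
  "Con q P f = map (\<lambda>i. if (\<exists>p\<in>P. f p = i) then 1 else 0) [1..<q+1]"

definition rho :: "nat \<Rightarrow> 'a::order set \<Rightarrow> nat \<Rightarrow> ('a \<Rightarrow> nat) \<Rightarrow> ('a \<Rightarrow> nat)" where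
  "rho q P i f = (\<lambda>x.
     if x \<in> P \<and> f x = i \<and> f(x := i + 1) \<in> Inc q P then i + 1
     else if x \<in> P \<and> f x = i + 1 \<and> f(x := i) \<in> Inc q P then i
     else f x)"

definition IncPro :: "nat \<Rightarrow> 'a::order set \<Rightarrow> ('a \<Rightarrow> nat) \<Rightarrow> ('a \<Rightarrow> nat)" where
  "IncPro q P f = foldl (\<lambda>g i. rho q P i g) f [1..<q]"

end

theory Submission
  imports Defs "HOL-Combinatorics.Transposition"
begin

text \<open>A single toggle \<open>\<rho>\<^sub>i\<close> changes the set of values taken on \<open>P\<close> exactly by swapping
  \<open>i\<close> and \<open>i+1\<close>: a label \<open>i\<close> that cannot be raised is blocked by a larger element labelled
  \<open>i+1\<close>, and that element is not lowered since it lies above an element labelled \<open>i\<close>;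
  symmetrically for \<open>i+1\<close>. Applying the toggles for \<open>i = 1, \<dots>, q-1\<close> in turn therefore
  moves every value \<open>j > 1\<close> of the set to \<open>j - 1\<close> and the value \<open>1\<close> to \<open>q\<close>, which rotates the
  content vector one step to the left.\<close>

lemma Inc_fun_upd_up_iff:
  assumes g: "g \<in> Inc q P" and p: "p \<in> P" "g p = i" and iq: "i + 1 \<le> q"
  shows "g(p := i + 1) \<in> Inc q P \<longleftrightarrow> \<not> (\<exists>y\<in>P. p < y \<and> g y = i + 1)"
proof
  assume raised: "g(p := i + 1) \<in> Inc q P"
  show "\<not> (\<exists>y\<in>P. p < y \<and> g y = i + 1)"
  proof
    assume "\<exists>y\<in>P. p < y \<and> g y = i + 1"
    then obtain y where y: "y \<in> P" "p < y" "g y = i + 1" by blast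
    then have "(g(p := i + 1)) p < (g(p := i + 1)) y"
      using raised p unfolding Inc_def by blast
    with y show False by (simp split: if_splits)
  qed
next
  assume blocked: "\<not> (\<exists>y\<in>P. p < y \<and> g y = i + 1)"
  have "(g(p := i + 1)) x < (g(p := i + 1)) y" if "x \<in> P" "y \<in> P" "x < y" for x y
  proof -
    have "g x < g y" using g that unfolding Inc_def by blast
    then show ?thesis
      using that blocked p by (cases "x = p"; cases "y = p") auto
  qed
  then show "g(p := i + 1) \<in> Inc q P"
    using g iq unfolding Inc_def by auto
qed

lemma Inc_fun_upd_down_iff:
  assumes g: "g \<in> Inc q P" and p: "p \<in> P" "g p = i + 1" and i: "1 \<le> i"
  shows "g(p := i) \<in> Inc q P \<longleftrightarrow> \<not> (\<exists>z\<in>P. z < p \<and> g z = i)"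
proof
  assume lowered: "g(p := i) \<in> Inc q P"
  show "\<not> (\<exists>z\<in>P. z < p \<and> g z = i)"
  proof
    assume "\<exists>z\<in>P. z < p \<and> g z = i"
    then obtain z where z: "z \<in> P" "z < p" "g z = i" by blast
    then have "(g(p := i)) z < (g(p := i)) p"
      using lowered p unfolding Inc_def by blast
    with z show False by (simp split: if_splits)
  qed
next
  assume blocked: "\<not> (\<exists>z\<in>P. z < p \<and> g z = i)"
  have "(g(p := i)) x < (g(p := i)) y" if "x \<in> P" "y \<in> P" "x < y" for x y
  proof -
    have "g x < g y" using g that unfolding Inc_def by blast
    then show ?thesis
      using that blocked p by (cases "x = p"; cases "y = p") auto
  qed
  moreover have "g p \<le> q" using g p(1) unfolding Inc_def by blast
  ultimately show "g(p := i) \<in> Inc q P"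
    using g i p unfolding Inc_def by auto
qed

lemma rho_apply:
  assumes g: "g \<in> Inc q P" and i: "1 \<le> i" "i + 1 \<le> q" and p: "p \<in> P"
  shows "rho q P i g p =
    (if g p = i \<and> \<not> (\<exists>y\<in>P. p < y \<and> g y = i + 1) then i + 1
     else if g p = i + 1 \<and> \<not> (\<exists>z\<in>P. z < p \<and> g z = i) then i
     else g p)"
  using Inc_fun_upd_up_iff[OF g p _ i(2)] Inc_fun_upd_down_iff[OF g p _ i(1)] p
  unfolding rho_def by auto

lemma rho_in_Inc:
  assumes g: "g \<in> Inc q P" and i: "1 \<le> i" "i + 1 \<le> q"
  shows "rho q P i g \<in> Inc q P"
proof -
  have "rho q P i g x < rho q P i g y" if "x \<in> P" "y \<in> P" "x < y" for x y
  proof -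
    have "g x < g y" using g that unfolding Inc_def by blast
    then show ?thesis
      unfolding rho_apply[OF g i that(1)] rho_apply[OF g i that(2)] using that by auto
  qed
  then show ?thesis
    using g i unfolding Inc_def by (auto simp: rho_apply[OF g i])
qed

lemma rho_image_iff:
  assumes g: "g \<in> Inc q P" and i: "1 \<le> i" "i + 1 \<le> q"
  shows "j \<in> rho q P i g ` P \<longleftrightarrow> transpose i (i + 1) j \<in> g ` P"
proof -
  note rho = rho_apply[OF g i]
  have lower: "i \<in> rho q P i g ` P \<longleftrightarrow> i + 1 \<in> g ` P"
  proof
    assume "i \<in> rho q P i g ` P"
    then obtain p where "p \<in> P" "rho q P i g p = i" by auto
    then show "i + 1 \<in> g ` P"
      using rho[of p] by (auto split: if_splits intro: rev_image_eqI)
  next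
    assume "i + 1 \<in> g ` P"
    then obtain p where p: "p \<in> P" "g p = i + 1" by auto
    show "i \<in> rho q P i g ` P"
    proof (cases "\<exists>z\<in>P. z < p \<and> g z = i")
      case True
      then obtain z where "z \<in> P" "z < p" "g z = i" by blast
      then have "rho q P i g z = i" using rho[of z] p by auto
      with \<open>z \<in> P\<close> show ?thesis by force
    qed (use p rho[of p] in force)
  qed
  have upper: "i + 1 \<in> rho q P i g ` P \<longleftrightarrow> i \<in> g ` P"
  proof
    assume "i + 1 \<in> rho q P i g ` P"
    then obtain p where "p \<in> P" "rho q P i g p = i + 1" by auto
    then show "i \<in> g ` P"
      using rho[of p] by (auto split: if_splits intro: rev_image_eqI)
  next
    assume "i \<in> g ` P"
    then obtain p where p: "p \<in> P" "g p = i" by auto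
    show "i + 1 \<in> rho q P i g ` P"
    proof (cases "\<exists>y\<in>P. p < y \<and> g y = i + 1")
      case True
      then obtain y where "y \<in> P" "p < y" "g y = i + 1" by blast
      then have "rho q P i g y = i + 1" using rho[of y] p by auto
      with \<open>y \<in> P\<close> show ?thesis by force
    qed (use p rho[of p] in force)
  qed
  have other: "j \<in> rho q P i g ` P \<longleftrightarrow> j \<in> g ` P" if "j \<noteq> i" "j \<noteq> i + 1"
    using that rho by (auto simp: image_iff)
  show ?thesis
    using lower upper other by (cases "j = i \<or> j = i + 1") auto
qed

lemma foldl_rho_in_Inc:
  assumes "f \<in> Inc q P" and "k < q"
  shows "foldl (\<lambda>g i. rho q P i g) f [1..<Suc k] \<in> Inc q P"
  using assms(2) by (induction k) (auto intro: rho_in_Inc assms(1))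

definition cyclic_shift :: "nat \<Rightarrow> nat \<Rightarrow> nat" where
  "cyclic_shift k j = (if 1 \<le> j \<and> j \<le> k then j + 1 else if j = k + 1 then 1 else j)"

lemma cyclic_shift_0 [simp]: "cyclic_shift 0 = id"
  by (auto simp: fun_eq_iff cyclic_shift_def)

lemma cyclic_shift_Suc:
  "cyclic_shift (Suc k) j = cyclic_shift k (transpose (Suc k) (Suc k + 1) j)"
  by (auto simp: cyclic_shift_def transpose_def)

lemma foldl_rho_image_iff:
  assumes f: "f \<in> Inc q P" and k: "k < q"
  shows "j \<in> foldl (\<lambda>g i. rho q P i g) f [1..<Suc k] ` P \<longleftrightarrow> cyclic_shift k j \<in> f ` P"
  using k
proof (induction k arbitrary: j)
  case 0
  then show ?case by simp
next
  case (Suc k)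
  let ?g = "foldl (\<lambda>g i. rho q P i g) f [1..<Suc k]"
  have "?g \<in> Inc q P" using foldl_rho_in_Inc[OF f] Suc.prems by simp
  then have "j \<in> rho q P (Suc k) ?g ` P \<longleftrightarrow> transpose (Suc k) (Suc k + 1) j \<in> ?g ` P"
    using rho_image_iff[of ?g q P "Suc k"] Suc.prems by simp
  also have "\<dots> \<longleftrightarrow> cyclic_shift (Suc k) j \<in> f ` P"
    using Suc by (simp add: cyclic_shift_Suc)
  finally show ?case by simp
qed

lemma IncPro_image_iff:
  assumes "f \<in> Inc q P" and "q = Suc k"
  shows "j \<in> IncPro q P f ` P \<longleftrightarrow> cyclic_shift k j \<in> f ` P"
  using foldl_rho_image_iff[OF assms(1)] assms(2) unfolding IncPro_def by simp

lemma Con_eq_map_image: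
  "Con q P f = map (\<lambda>i. if i \<in> f ` P then 1 else 0) [1..<q + 1]"
  unfolding Con_def by (metis image_iff)

lemma Con_IncPro:
  assumes f: "f \<in> Inc q P" and q: "1 \<le> q"
  shows "Con q P (IncPro q P f) = rotate1 (Con q P f)"
proof -
  obtain k where k: "q = Suc k" using q by (cases q) auto
  define h where "h i = (if i \<in> f ` P then 1 else 0 :: nat)" for i
  have "Con q P (IncPro q P f) = map (h \<circ> cyclic_shift k) [1..<q + 1]"
    by (simp add: Con_eq_map_image IncPro_image_iff[OF f k] h_def)
  also have "[1..<q + 1] = [1..<Suc k] @ [Suc k]"
    using k by simp
  also have "map (h \<circ> cyclic_shift k) \<dots> = map h [2..<Suc q] @ [h 1]"
  proof -
    have "map (cyclic_shift k) [1..<Suc k] = map Suc [1..<Suc k]"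
      by (rule map_cong) (auto simp: cyclic_shift_def)
    also have "\<dots> = [2..<Suc q]"
      using k map_Suc_upt[of 1 "Suc k"] by (simp add: numeral_2_eq_2 del: upt_Suc)
    finally show ?thesis
      by (simp add: cyclic_shift_def flip: map_map)
  qed
  also have "\<dots> = rotate1 (map h (1 # [2..<Suc q]))" by simp
  also have "1 # [2..<Suc q] = [1..<q + 1]"
    using q upt_conv_Cons[of 1 "Suc q"] by (simp add: numeral_2_eq_2)
  also have "map h [1..<q + 1] = Con q P f"
    unfolding Con_eq_map_image h_def ..
  finally show ?thesis .
qed

theorem lemma3p9:
  fixes P :: "'a::order set" and q :: nat and f :: "'a \<Rightarrow> nat" and a :: "nat list"
  assumes "finite P" and "q \<ge> 1" and "f \<in> Inc q P"
    and "Con q P f = a"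
  shows "Con q P (IncPro q P f) = tl a @ [hd a]"
proof -
  have "a \<noteq> []" using assms(2,4) unfolding Con_def by auto
  then show ?thesis
    using Con_IncPro[OF assms(3,2)] assms(4) by (simp add: rotate1_hd_tl)
qed

end
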